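(* Let $X,Y\in\mathbb R^{d\times d}$ be symmetric positive definite with $Y\preceq X$. Then for all $0<c\le C$, $$X^{-1/2}(X-Y)X^{-1/2}\preceq\frac{3(\log C-\log c)}{\pi^2}(\log X-\log Y)+\Big(\frac{12cd}{\pi^2\lambda_{\min}(X)^2}+\frac{12d}{\pi^2C}\Big)\operatorname{Tr}(X-Y)\,I_d.$$
   Context: $\log$ of a symmetric positive definite matrix is the matrix logarithm; $\lambda_{\min}(X)$ is the smallest eigenvalue; $\preceq$ is the Loewner order. *)

theory Defs
  imports "HOL-Analysis.Analysis"
begin

definition diag_mat :: "real^'n \<Rightarrow> real^'n^'n" where
  "diag_mat d = (\<chi> i j. if i = j then d $ i else 0)"

definition sym_mat :: "real^'n^'n \<Rightarrow> bool" where
  "sym_mat A \<longleftrightarrow> transpose A = A"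

definition spd :: "real^'n^'n \<Rightarrow> bool" where
  "spd A \<longleftrightarrow> sym_mat A \<and> (\<forall>x. x \<noteq> 0 \<longrightarrow> x \<bullet> (A *v x) > 0)"

definition loewner_le :: "real^'n^'n \<Rightarrow> real^'n^'n \<Rightarrow> bool" (infix "\<preceq>\<^sub>L" 50) where
  "A \<preceq>\<^sub>L B \<longleftrightarrow> (\<forall>x. x \<bullet> (A *v x) \<le> x \<bullet> (B *v x))"

definition mat_fun :: "(real \<Rightarrow> real) \<Rightarrow> real^'n^'n \<Rightarrow> real^'n^'n" where
  "mat_fun f A = (SOME L. \<exists>P d. orthogonal_matrix P \<and> A = P ** diag_mat d ** transpose P
                        \<and> L = P ** diag_mat (\<chi> i. f (d $ i)) ** transpose P)"

definition mat_log :: "real^'n^'n \<Rightarrow> real^'n^'n" where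
  "mat_log A = mat_fun ln A"

definition mat_inv_sqrt :: "real^'n^'n \<Rightarrow> real^'n^'n" where
  "mat_inv_sqrt A = mat_fun (\<lambda>t. 1 / sqrt t) A"

definition lambda_min :: "real^'n^'n \<Rightarrow> real" where
  "lambda_min A = Min {l. \<exists>v. v \<noteq> 0 \<and> A *v v = l *\<^sub>R v}"

end

theory Submission
  imports Defs
begin

text \<open>
  Write \<open>D = X - Y\<close> and \<open>u(T) = (X + T)\<^sup>-\<^sup>1 v\<close>. The proof combines the integral representations
  \<open>\<pi> X\<^sup>-\<^sup>1\<^sup>/\<^sup>2 = \<integral>\<^sub>0\<^sup>\<infinity> T\<^sup>-\<^sup>1\<^sup>/\<^sup>2 (X + T)\<^sup>-\<^sup>1 dT\<close> and
  \<open>log X - log Y = \<integral>\<^sub>0\<^sup>\<infinity> ((Y + T)\<^sup>-\<^sup>1 - (X + T)\<^sup>-\<^sup>1) dT\<close> with the operator inequality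
  \<open>(X + T)\<^sup>-\<^sup>1 D (X + T)\<^sup>-\<^sup>1 \<preceq> (Y + T)\<^sup>-\<^sup>1 - (X + T)\<^sup>-\<^sup>1\<close>. Split \<open>\<pi> X\<^sup>-\<^sup>1\<^sup>/\<^sup>2 v\<close> into the
  integrals over \<open>[0, c]\<close>, \<open>[c, C]\<close> and \<open>[C, \<infinity>)\<close>. By Cauchy-Schwarz and the operator
  inequality, the middle piece \<open>b\<close> satisfies
  \<open>b\<^sup>T D b \<le> log (C / c) \<integral>\<^sub>c\<^sup>C u(T)\<^sup>T D u(T) dT \<le> log (C / c) v\<^sup>T (log X - log Y) v\<close>.
  The outer pieces have norm at most \<open>2 \<surd>c |v| / \<lambda>\<^sub>m\<^sub>i\<^sub>n(X)\<close> and \<open>2 |v| / \<surd>C\<close>, and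
  \<open>D \<preceq> Tr D\<close> bounds their contribution.
  The pieces are recombined with \<open>(a + b + c)\<^sup>T D (a + b + c) \<le> 3 (a\<^sup>T D a + b\<^sup>T D b + c\<^sup>T D c)\<close>.
  No integral is formalised: each one is replaced by an explicit antiderivative in its upper
  limit, and every inequality between integrals becomes the monotonicity of a function of that
  limit.
\<close>

section \<open>Spectral theorem for symmetric matrices\<close>

declare transpose_matrix_vector [simp del]

lemma sym_mat_inner_commute:
  fixes A :: "real^'n^'n"
  assumes "sym_mat A"
  shows "u \<bullet> (A *v w) = w \<bullet> (A *v u)"
proof -
  have "u \<bullet> (A *v w) = (transpose A *v u) \<bullet> w"
    by (simp add: transpose_matrix_vector dot_lmul_matrix)
  then show ?thesis
    using assms by (simp add: sym_mat_def inner_commute)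
qed

lemma linear_coeff_eq_0_if_quadratic_nonneg:
  fixes b q :: real
  assumes nonneg: "\<And>t. 0 \<le> 2 * t * b + t\<^sup>2 * q" and "0 \<le> q"
  shows "b = 0"
proof -
  define t where "t = - b / (q + 1)"
  have t: "(q + 1) * t = - b"
    using \<open>0 \<le> q\<close> by (simp add: t_def)
  have "0 \<le> (q + 1)\<^sup>2 * (2 * t * b + t\<^sup>2 * q)"
    using nonneg by simp
  also have "\<dots> = 2 * b * (q + 1) * ((q + 1) * t) + ((q + 1) * t)\<^sup>2 * q"
    by (simp add: algebra_simps power2_eq_square)
  also have "\<dots> = - b\<^sup>2 * (q + 2)"
    unfolding t by (simp add: algebra_simps power2_eq_square)
  finally show "b = 0"
    using \<open>0 \<le> q\<close> by (simp add: mult_le_0_iff)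
qed

lemma quadratic_form_max_on_subspace:
  fixes A :: "real^'n^'n"
  assumes "subspace W" and "w \<in> W" "w \<noteq> 0"
  obtains x where "x \<in> W" "norm x = 1" "\<And>y. y \<in> W \<Longrightarrow> y \<bullet> (A *v y) \<le> (x \<bullet> (A *v x)) * (y \<bullet> y)"
proof -
  define K where "K = sphere 0 1 \<inter> W"
  have "compact K"
    unfolding K_def by (intro compact_Int_closed compact_sphere closed_subspace \<open>subspace W\<close>)
  moreover have "(1 / norm w) *\<^sub>R w \<in> K"
    using assms by (simp add: K_def subspace_scale)
  moreover have "continuous_on K (\<lambda>x. x \<bullet> (A *v x))"
    by (intro continuous_intros matrix_vector_mult_linear_continuous_on[unfolded o_def])
  ultimately obtain x where "x \<in> K" and max: "\<And>y. y \<in> K \<Longrightarrow> y \<bullet> (A *v y) \<le> x \<bullet> (A *v x)"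
    using continuous_attains_sup[of K "\<lambda>x. x \<bullet> (A *v x)"] by blast
  have "y \<bullet> (A *v y) \<le> (x \<bullet> (A *v x)) * (y \<bullet> y)" if "y \<in> W" for y
  proof (cases "y = 0")
    case False
    have "(1 / norm y) *\<^sub>R y \<in> K"
      using that False \<open>subspace W\<close> by (simp add: K_def subspace_scale)
    then have "(1 / norm y)\<^sup>2 * (y \<bullet> (A *v y)) \<le> x \<bullet> (A *v x)"
      using max by (fastforce simp: matrix_vector_mult_scaleR power2_eq_square)
    then show ?thesis
      using False by (simp add: field_simps power2_norm_eq_inner)
  qed simp
  moreover have "x \<in> W" "norm x = 1"
    using \<open>x \<in> K\<close> by (auto simp: K_def)
  ultimately show thesis
    using that by blast
qed

lemma sym_mat_rayleigh_max_eigenvector: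
  fixes A :: "real^'n^'n"
  assumes sym: "sym_mat A" and "subspace W" and invariant: "\<And>y. y \<in> W \<Longrightarrow> A *v y \<in> W"
    and "x \<in> W" "norm x = 1" and max: "\<And>y. y \<in> W \<Longrightarrow> y \<bullet> (A *v y) \<le> (x \<bullet> (A *v x)) * (y \<bullet> y)"
  shows "A *v x = (x \<bullet> (A *v x)) *\<^sub>R x"
proof -
  define m where "m = x \<bullet> (A *v x)"
  define gap where "gap y z = m * (y \<bullet> z) - y \<bullet> (A *v z)" for y z
  have gap_nonneg: "0 \<le> gap y y" if "y \<in> W" for y
    using max[OF that] by (simp add: gap_def m_def)
  have "gap x x = 0"
    using \<open>norm x = 1\<close> by (simp add: gap_def m_def power2_norm_eq_inner[symmetric])
  have gap_x: "gap x y = 0" if "y \<in> W" for y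
  proof (rule linear_coeff_eq_0_if_quadratic_nonneg)
    show "0 \<le> gap y y"
      by (rule gap_nonneg[OF that])
    fix t :: real
    have "x + t *\<^sub>R y \<in> W"
      using \<open>x \<in> W\<close> that \<open>subspace W\<close> by (simp add: subspace_add subspace_scale)
    then have "0 \<le> gap (x + t *\<^sub>R y) (x + t *\<^sub>R y)"
      by (rule gap_nonneg)
    also have "\<dots> = gap x x + 2 * t * gap x y + t\<^sup>2 * gap y y"
      using sym_mat_inner_commute[OF sym, of y x]
      by (simp add: gap_def algebra_simps inner_add_left inner_add_right inner_commute power2_eq_square)
    finally show "0 \<le> 2 * t * gap x y + t\<^sup>2 * gap y y"
      using \<open>gap x x = 0\<close> by simp
  qed
  define z where "z = m *\<^sub>R x - A *v x"
  have "z \<in> W"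
    using \<open>x \<in> W\<close> invariant \<open>subspace W\<close> by (simp add: z_def subspace_diff subspace_scale)
  moreover have "z \<bullet> z = gap x z"
    using sym_mat_inner_commute[OF sym, of z x] by (simp add: z_def gap_def inner_diff_left inner_commute)
  ultimately have "z = 0"
    using gap_x by simp
  then show ?thesis
    by (simp add: z_def m_def)
qed

lemma sym_mat_orthogonal_complement_invariant:
  fixes A :: "real^'n^'n"
  assumes "sym_mat A" and eig: "\<And>b. b \<in> B \<Longrightarrow> A *v b = (b \<bullet> (A *v b)) *\<^sub>R b"
    and orth: "\<forall>b\<in>B. b \<bullet> z = 0"
  shows "\<forall>b\<in>B. b \<bullet> (A *v z) = 0"
proof
  fix b
  assume "b \<in> B"
  have "b \<bullet> (A *v z) = z \<bullet> (A *v b)"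
    by (rule sym_mat_inner_commute[OF assms(1)])
  also have "\<dots> = (b \<bullet> (A *v b)) * (b \<bullet> z)"
    by (subst eig[OF \<open>b \<in> B\<close>]) (simp add: inner_commute)
  finally show "b \<bullet> (A *v z) = 0"
    using orth \<open>b \<in> B\<close> by simp
qed

lemma sym_mat_orthonormal_eigenvectors:
  fixes A :: "real^'n^'n"
  assumes sym: "sym_mat A" and "k \<le> CARD('n)"
  shows "\<exists>B. finite B \<and> card B = k \<and> pairwise orthogonal B \<and>
           (\<forall>x\<in>B. norm x = 1 \<and> A *v x = (x \<bullet> (A *v x)) *\<^sub>R x)"
  using \<open>k \<le> CARD('n)\<close>
proof (induction k)
  case 0
  show ?case by (rule exI[of _ "{}"]) simp
next
  case (Suc k)
  then obtain B where "finite B" "card B = k" and orth: "pairwise orthogonal B"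
    and eig: "\<forall>x\<in>B. norm x = 1 \<and> A *v x = (x \<bullet> (A *v x)) *\<^sub>R x"
    by auto
  have "independent B"
    using orth eig pairwise_orthogonal_independent by fastforce
  then have "dim B < DIM(real^'n)"
    using Suc.prems \<open>card B = k\<close> dim_eq_card_independent by fastforce
  then obtain w where "w \<noteq> 0" and w_orth: "\<And>y. y \<in> span B \<Longrightarrow> orthogonal w y"
    by (rule orthogonal_to_subspace_exists) blast
  define W where "W = {z. \<forall>b\<in>B. b \<bullet> z = 0}"
  have "subspace W"
    by (auto simp: W_def subspace_def inner_add_right)
  have "w \<in> W"
    using w_orth span_base by (fastforce simp: W_def orthogonal_def inner_commute)
  have invariant: "A *v z \<in> W" if "z \<in> W" for z
    using sym_mat_orthogonal_complement_invariant[OF sym, of B z] eig that by (simp add: W_def)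
  obtain x where x: "x \<in> W" "norm x = 1"
    and max: "\<And>y. y \<in> W \<Longrightarrow> y \<bullet> (A *v y) \<le> (x \<bullet> (A *v x)) * (y \<bullet> y)"
    using quadratic_form_max_on_subspace[OF \<open>subspace W\<close> \<open>w \<in> W\<close> \<open>w \<noteq> 0\<close>] by blast
  have "A *v x = (x \<bullet> (A *v x)) *\<^sub>R x"
    by (rule sym_mat_rayleigh_max_eigenvector[OF sym \<open>subspace W\<close> invariant x max])
  moreover have "x \<notin> B"
    using x by (auto simp: W_def)
  moreover have "pairwise orthogonal (insert x B)"
    unfolding pairwise_insert using orth \<open>x \<in> W\<close>
    by (auto simp: W_def orthogonal_def inner_commute)
  ultimately show ?case
    using \<open>finite B\<close> \<open>card B = k\<close> eig x by (intro exI[of _ "insert x B"]) auto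
qed

theorem sym_mat_orthogonal_diagonalization:
  fixes A :: "real^'n^'n"
  assumes sym: "sym_mat A"
  obtains P d where "orthogonal_matrix P" "A = P ** diag_mat d ** transpose P"
proof -
  obtain B where "finite B" "card B = CARD('n)" and orth: "pairwise orthogonal B"
    and eig: "\<forall>x\<in>B. norm x = 1 \<and> A *v x = (x \<bullet> (A *v x)) *\<^sub>R x"
    using sym_mat_orthonormal_eigenvectors[OF sym, of "CARD('n)"] by auto
  then obtain h where h: "bij_betw h (UNIV :: 'n set) B"
    using finite_same_card_bij[of "UNIV :: 'n set" B] by auto
  define P where "P = (\<chi> i j. h j $ i)"
  define d where "d = (\<chi> j. h j \<bullet> (A *v h j))"
  have "h j \<bullet> h k = (if j = k then 1 else 0)" for j k
  proof (cases "j = k")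
    case True
    then show ?thesis
      using eig bij_betw_apply[OF h] by (simp add: power2_norm_eq_inner[symmetric])
  next
    case False
    then have "h j \<noteq> h k"
      using h by (auto simp: bij_betw_def inj_on_def)
    then show ?thesis
      using orth bij_betw_apply[OF h] False by (auto simp: pairwise_def orthogonal_def)
  qed
  then have "transpose P ** P = mat 1"
    by (simp add: P_def matrix_matrix_mult_def transpose_def mat_def inner_vec_def vec_eq_iff)
  then have "orthogonal_matrix P"
    by (simp add: orthogonal_matrix)
  have "A ** P = P ** diag_mat d"
  proof -
    have "A *v h j = d $ j *\<^sub>R h j" for j
      using eig bij_betw_apply[OF h] by (simp add: d_def)
    then show ?thesis
      by (simp add: vec_eq_iff matrix_matrix_mult_def matrix_vector_mult_def P_def diag_mat_def
          if_distrib[where f="\<lambda>x. _ * x"] mult.commute cong: if_cong)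
  qed
  then have "P ** diag_mat d ** transpose P = A ** (P ** transpose P)"
    by (simp add: matrix_mul_assoc)
  then have "A = P ** diag_mat d ** transpose P"
    using \<open>orthogonal_matrix P\<close> by (simp add: orthogonal_matrix_def)
  then show thesis
    using that \<open>orthogonal_matrix P\<close> by blast
qed

section \<open>Functional calculus\<close>

lemma diag_mat_mult_vector: "diag_mat g *v z = (\<chi> i. g $ i * z $ i)"
  by (simp add: diag_mat_def matrix_vector_mult_def vec_eq_iff
      if_distrib[where f="\<lambda>x. x * _"] cong: if_cong)

lemma inner_matrix_vector_transpose:
  fixes P :: "real^'n^'m"
  shows "w \<bullet> (P *v z) = (transpose P *v w) \<bullet> z"
  by (simp add: transpose_matrix_vector dot_lmul_matrix)

lemma orthogonal_matrix_vector_cancel: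
  fixes P :: "real^'n^'n"
  assumes "orthogonal_matrix P"
  shows "transpose P *v (P *v z) = z" "P *v (transpose P *v z) = z"
  using assms by (simp_all add: matrix_vector_mul_assoc orthogonal_matrix_def)

lemma orthogonal_matrix_inner:
  fixes P :: "real^'n^'n"
  assumes "orthogonal_matrix P"
  shows "(P *v a) \<bullet> (P *v b) = a \<bullet> b"
  using assms by (simp add: inner_matrix_vector_transpose orthogonal_matrix_vector_cancel)

lemma orthogonal_matrix_axis_neq_0:
  fixes P :: "real^'n^'n"
  assumes "orthogonal_matrix P"
  shows "P *v axis i 1 \<noteq> 0"
  using orthogonal_matrix_vector_cancel(1)[OF assms, of "axis i 1"] by (auto simp: axis_eq_0_iff)

lemma diag_conj_mult_vector:
  fixes P :: "real^'n^'n"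
  shows "(P ** diag_mat d ** transpose P) *v w = P *v (\<chi> i. d $ i * (transpose P *v w) $ i)"
  by (simp add: matrix_vector_mul_assoc[symmetric] diag_mat_mult_vector)

text \<open>Two orthogonal diagonalisations of the same matrix agree up to a rotation that commutes
  with the diagonal parts; applying \<open>f\<close> to the eigenvalues preserves this, so
  \<^const>\<open>mat_fun\<close> does not depend on the choice made by \<open>SOME\<close>.\<close>

lemma orthogonal_diagonalization_fun_unique:
  fixes P Q :: "real^'n^'n"
  assumes P: "orthogonal_matrix P" and Q: "orthogonal_matrix Q"
    and eq: "P ** diag_mat d ** transpose P = Q ** diag_mat e ** transpose Q"
  shows "P ** diag_mat (\<chi> i. f (d $ i)) ** transpose P = Q ** diag_mat (\<chi> i. f (e $ i)) ** transpose Q"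
proof -
  define U where "U = transpose Q ** P"
  have PP: "transpose P ** P = mat 1" "P ** transpose P = mat 1"
    and QQ: "transpose Q ** Q = mat 1" "Q ** transpose Q = mat 1"
    using P Q by (simp_all add: orthogonal_matrix_def)
  have "U ** diag_mat d = transpose Q ** (P ** diag_mat d ** transpose P) ** P"
    unfolding U_def using PP by (simp add: matrix_mul_assoc[symmetric])
  also have "\<dots> = transpose Q ** (Q ** diag_mat e ** transpose Q) ** P"
    by (simp only: eq)
  also have "\<dots> = diag_mat e ** U"
    unfolding U_def using QQ by (simp add: matrix_mul_assoc)
  finally have "U $ i $ j * d $ j = e $ i * U $ i $ j" for i j
    by (simp add: vec_eq_iff matrix_matrix_mult_def diag_mat_def if_distrib[where f="\<lambda>x. _ * x"]
        if_distrib[where f="\<lambda>x. x * _"] cong: if_cong)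
  then have "U $ i $ j * f (d $ j) = f (e $ i) * U $ i $ j" for i j
    by (metis mult.commute mult_cancel_left mult_zero_left)
  then have commute: "U ** diag_mat (\<chi> i. f (d $ i)) = diag_mat (\<chi> i. f (e $ i)) ** U"
    by (simp add: vec_eq_iff matrix_matrix_mult_def diag_mat_def if_distrib[where f="\<lambda>x. _ * x"]
        if_distrib[where f="\<lambda>x. x * _"] cong: if_cong)
  have "P ** diag_mat (\<chi> i. f (d $ i)) ** transpose P
      = Q ** (U ** diag_mat (\<chi> i. f (d $ i))) ** transpose P"
    unfolding U_def using QQ by (simp add: matrix_mul_assoc)
  also have "\<dots> = Q ** diag_mat (\<chi> i. f (e $ i)) ** (U ** transpose P)"
    by (simp add: commute matrix_mul_assoc)
  also have "U ** transpose P = transpose Q"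
    unfolding U_def using PP by (simp add: matrix_mul_assoc[symmetric])
  finally show ?thesis .
qed

lemma mat_fun_eq:
  fixes P :: "real^'n^'n"
  assumes "orthogonal_matrix P" and "A = P ** diag_mat d ** transpose P"
  shows "mat_fun f A = P ** diag_mat (\<chi> i. f (d $ i)) ** transpose P"
proof -
  let ?R = "\<lambda>L. \<exists>P d. orthogonal_matrix P \<and> A = P ** diag_mat d ** transpose P
                   \<and> L = P ** diag_mat (\<chi> i. f (d $ i)) ** transpose P"
  have "?R (mat_fun f A)"
    unfolding mat_fun_def by (rule someI[of ?R]) (use assms in blast)
  then show ?thesis
    using orthogonal_diagonalization_fun_unique assms by metis
qed

lemma mat_fun_mult_vector:
  fixes P :: "real^'n^'n"
  assumes "orthogonal_matrix P" and "A = P ** diag_mat d ** transpose P"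
  shows "mat_fun f A *v w = P *v (\<chi> i. f (d $ i) * (transpose P *v w) $ i)"
  using assms by (simp add: mat_fun_eq diag_conj_mult_vector)

lemma inner_mat_fun:
  fixes P :: "real^'n^'n"
  assumes "orthogonal_matrix P" and "A = P ** diag_mat d ** transpose P"
  shows "u \<bullet> (mat_fun f A *v w) = (\<Sum>i\<in>UNIV. f (d $ i) * (transpose P *v u) $ i * (transpose P *v w) $ i)"
  unfolding mat_fun_mult_vector[OF assms] inner_matrix_vector_transpose
  by (simp add: inner_vec_def algebra_simps)

lemma eigenvalues_diagonalization:
  fixes P :: "real^'n^'n"
  assumes P: "orthogonal_matrix P" and A: "A = P ** diag_mat d ** transpose P"
  shows "{l. \<exists>v. v \<noteq> 0 \<and> A *v v = l *\<^sub>R v} = range (($) d)"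
proof (intro equalityI subsetI)
  fix l
  assume "l \<in> {l. \<exists>v. v \<noteq> 0 \<and> A *v v = l *\<^sub>R v}"
  then obtain v where "v \<noteq> 0" and eigen: "A *v v = l *\<^sub>R v"
    by blast
  define z where "z = transpose P *v v"
  have "z \<noteq> 0"
    using \<open>v \<noteq> 0\<close> orthogonal_matrix_vector_cancel(2)[OF P, of v] by (auto simp: z_def)
  then obtain i where "z $ i \<noteq> 0"
    by (auto simp: vec_eq_iff)
  have "transpose P *v (A *v v) = transpose P *v (l *\<^sub>R v)"
    by (simp add: eigen)
  then have "(\<chi> k. d $ k * z $ k) = l *\<^sub>R z"
    by (simp add: A diag_conj_mult_vector orthogonal_matrix_vector_cancel[OF P]
        matrix_vector_mult_scaleR z_def)
  then have "d $ i * z $ i = l * z $ i"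
    by (simp add: vec_eq_iff)
  then have "l = d $ i"
    using \<open>z $ i \<noteq> 0\<close> by simp
  then show "l \<in> range (($) d)"
    by simp
next
  fix l
  assume "l \<in> range (($) d)"
  then obtain j where "l = d $ j"
    by blast
  have "(\<chi> k. d $ k * axis j 1 $ k) = d $ j *\<^sub>R axis j (1::real)"
    by (simp add: vec_eq_iff axis_def)
  then have "A *v (P *v axis j 1) = l *\<^sub>R (P *v axis j 1)"
    by (simp add: A \<open>l = d $ j\<close> diag_conj_mult_vector orthogonal_matrix_vector_cancel[OF P]
        matrix_vector_mult_scaleR)
  then show "l \<in> {l. \<exists>v. v \<noteq> 0 \<and> A *v v = l *\<^sub>R v}"
    using orthogonal_matrix_axis_neq_0[OF P] by blast
qed

lemma lambda_min_diagonalization: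
  fixes P :: "real^'n^'n"
  assumes "orthogonal_matrix P" and "A = P ** diag_mat d ** transpose P"
  shows "lambda_min A = Min (range (($) d))"
  using eigenvalues_diagonalization[OF assms] by (simp add: lambda_min_def)

lemma sym_mat_spectral_decomposition:
  fixes A :: "real^'n^'n"
  assumes "sym_mat A"
  obtains P d where "orthogonal_matrix P" "A = P ** diag_mat d ** transpose P"
    "\<And>i. lambda_min A \<le> d $ i"
proof -
  obtain P d where "orthogonal_matrix P" "A = P ** diag_mat d ** transpose P"
    using sym_mat_orthogonal_diagonalization[OF assms] by blast
  moreover from this have "lambda_min A \<le> d $ i" for i
    by (simp add: lambda_min_diagonalization)
  ultimately show thesis
    using that by blast
qed

lemma lambda_min_eigenvector:
  fixes A :: "real^'n^'n"
  assumes "sym_mat A"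
  obtains v where "v \<noteq> 0" "A *v v = lambda_min A *\<^sub>R v"
proof -
  obtain P d where "orthogonal_matrix P" "A = P ** diag_mat d ** transpose P"
    using sym_mat_orthogonal_diagonalization[OF assms] by blast
  then have "lambda_min A \<in> {l. \<exists>v. v \<noteq> 0 \<and> A *v v = l *\<^sub>R v}"
    by (simp add: lambda_min_diagonalization eigenvalues_diagonalization)
  then show thesis
    using that by blast
qed

lemma lambda_min_pos:
  fixes A :: "real^'n^'n"
  assumes "spd A"
  shows "0 < lambda_min A"
proof -
  obtain v where "v \<noteq> 0" "A *v v = lambda_min A *\<^sub>R v"
    using assms lambda_min_eigenvector by (auto simp: spd_def)
  moreover from \<open>v \<noteq> 0\<close> have "0 < v \<bullet> (A *v v)"
    using assms by (simp add: spd_def)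
  ultimately have "0 < lambda_min A * (v \<bullet> v)"
    by simp
  then show ?thesis
    using \<open>v \<noteq> 0\<close> by (metis inner_gt_zero_iff zero_less_mult_pos2)
qed

lemma lambda_min_nonneg:
  fixes A :: "real^'n^'n"
  assumes "sym_mat A" and psd: "\<And>w. 0 \<le> w \<bullet> (A *v w)"
  shows "0 \<le> lambda_min A"
proof -
  obtain v where "v \<noteq> 0" "A *v v = lambda_min A *\<^sub>R v"
    using assms lambda_min_eigenvector by blast
  moreover have "0 \<le> v \<bullet> (A *v v)"
    by (rule psd)
  ultimately have "0 \<le> lambda_min A * (v \<bullet> v)"
    by simp
  moreover have "0 < v \<bullet> v"
    using \<open>v \<noteq> 0\<close> by simp
  ultimately show ?thesis
    by (simp add: zero_le_mult_iff)
qed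

text \<open>Hypotheses on the scalar functions are only required on \<open>[\<lambda>\<^sub>m\<^sub>i\<^sub>n(A), \<infinity>)\<close>, which
  contains the spectrum; this is what allows \<open>ln\<close> and \<open>1 / \<surd>t\<close> for positive definite \<open>A\<close>.\<close>

lemma mat_fun_cong:
  fixes A :: "real^'n^'n"
  assumes "sym_mat A" and "\<And>t. lambda_min A \<le> t \<Longrightarrow> f t = g t"
  shows "mat_fun f A = mat_fun g A"
proof -
  obtain P d where "orthogonal_matrix P" "A = P ** diag_mat d ** transpose P"
    "\<And>i. lambda_min A \<le> d $ i"
    using sym_mat_spectral_decomposition[OF assms(1)] by blast
  then show ?thesis
    using assms(2) by (simp add: mat_fun_eq)
qed

lemma mat_fun_const:
  fixes A :: "real^'n^'n"
  assumes "sym_mat A"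
  shows "mat_fun (\<lambda>_. k) A = k *\<^sub>R mat 1"
proof -
  obtain P d where P: "orthogonal_matrix P" and A: "A = P ** diag_mat d ** transpose P"
    using sym_mat_orthogonal_diagonalization[OF assms] by blast
  have "mat_fun (\<lambda>_. k) A *v w = (k *\<^sub>R mat 1) *v w" for w
  proof -
    have "(\<chi> i. k * (transpose P *v w) $ i) = k *\<^sub>R (transpose P *v w)"
      by (simp add: vec_eq_iff)
    then show ?thesis
      by (simp add: mat_fun_mult_vector[OF P A] matrix_vector_mult_scaleR
          orthogonal_matrix_vector_cancel[OF P] scaleR_matrix_vector_assoc[symmetric])
  qed
  then show ?thesis
    by (simp add: matrix_eq)
qed

lemma mat_fun_ident:
  fixes A :: "real^'n^'n"
  assumes "sym_mat A"
  shows "mat_fun (\<lambda>t. t) A = A"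
proof -
  obtain P d where P: "orthogonal_matrix P" and A: "A = P ** diag_mat d ** transpose P"
    using sym_mat_orthogonal_diagonalization[OF assms] by blast
  have "(\<chi> i. d $ i) = d"
    by (simp add: vec_eq_iff)
  then show ?thesis
    using mat_fun_eq[OF P A, of "\<lambda>t. t"] A by metis
qed

lemma mat_fun_add:
  fixes A :: "real^'n^'n"
  assumes "sym_mat A"
  shows "mat_fun (\<lambda>t. f t + g t) A = mat_fun f A + mat_fun g A"
proof -
  obtain P d where P: "orthogonal_matrix P" and A: "A = P ** diag_mat d ** transpose P"
    using sym_mat_orthogonal_diagonalization[OF assms] by blast
  have "(\<chi> i. (f (d $ i) + g (d $ i)) * (transpose P *v w) $ i)
      = (\<chi> i. f (d $ i) * (transpose P *v w) $ i) + (\<chi> i. g (d $ i) * (transpose P *v w) $ i)" for w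
    by (simp add: vec_eq_iff algebra_simps)
  then show ?thesis
    by (simp add: matrix_eq mat_fun_mult_vector[OF P A] matrix_vector_mult_add_rdistrib
        matrix_vector_right_distrib)
qed

lemma mat_fun_cmult:
  fixes A :: "real^'n^'n"
  assumes "sym_mat A"
  shows "mat_fun (\<lambda>t. k * f t) A = k *\<^sub>R mat_fun f A"
proof -
  obtain P d where P: "orthogonal_matrix P" and A: "A = P ** diag_mat d ** transpose P"
    using sym_mat_orthogonal_diagonalization[OF assms] by blast
  have "(\<chi> i. k * f (d $ i) * (transpose P *v w) $ i) = k *\<^sub>R (\<chi> i. f (d $ i) * (transpose P *v w) $ i)"
    for w
    by (simp add: vec_eq_iff)
  then show ?thesis
    by (simp add: matrix_eq mat_fun_mult_vector[OF P A] scaleR_matrix_vector_assoc[symmetric]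
        matrix_vector_mult_scaleR)
qed

lemma mat_fun_mult:
  fixes A :: "real^'n^'n"
  assumes "sym_mat A"
  shows "mat_fun (\<lambda>t. f t * g t) A = mat_fun f A ** mat_fun g A"
proof -
  obtain P d where P: "orthogonal_matrix P" and A: "A = P ** diag_mat d ** transpose P"
    using sym_mat_orthogonal_diagonalization[OF assms] by blast
  show ?thesis
    by (simp add: matrix_eq mat_fun_mult_vector[OF P A] matrix_vector_mul_assoc[symmetric]
        orthogonal_matrix_vector_cancel[OF P] mult.assoc)
qed

lemma sym_mat_mat_fun:
  fixes A :: "real^'n^'n"
  assumes "sym_mat A"
  shows "sym_mat (mat_fun f A)"
proof -
  obtain P d where P: "orthogonal_matrix P" and A: "A = P ** diag_mat d ** transpose P"
    using sym_mat_orthogonal_diagonalization[OF assms] by blast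
  have "transpose (diag_mat g) = diag_mat g" for g :: "real^'n"
    by (simp add: diag_mat_def transpose_def vec_eq_iff)
  then show ?thesis
    by (simp add: sym_mat_def mat_fun_eq[OF P A] matrix_transpose_mul matrix_mul_assoc)
qed

lemma inner_mat_fun_mono:
  fixes A :: "real^'n^'n"
  assumes "sym_mat A" and "\<And>t. lambda_min A \<le> t \<Longrightarrow> f t \<le> g t"
  shows "w \<bullet> (mat_fun f A *v w) \<le> w \<bullet> (mat_fun g A *v w)"
proof -
  obtain P d where P: "orthogonal_matrix P" and A: "A = P ** diag_mat d ** transpose P"
    and spectrum: "\<And>i. lambda_min A \<le> d $ i"
    using sym_mat_spectral_decomposition[OF assms(1)] by blast
  show ?thesis
    unfolding inner_mat_fun[OF P A]
  proof (rule sum_mono)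
    fix i
    have "f (d $ i) \<le> g (d $ i)"
      using assms(2) spectrum by blast
    then show "f (d $ i) * (transpose P *v w) $ i * (transpose P *v w) $ i
        \<le> g (d $ i) * (transpose P *v w) $ i * (transpose P *v w) $ i"
      using mult_right_mono[of _ _ "(transpose P *v w) $ i * (transpose P *v w) $ i"]
      by (simp add: mult.assoc)
  qed
qed

lemma norm_mat_fun_mult_vector_le:
  fixes A :: "real^'n^'n"
  assumes "sym_mat A" and bound: "\<And>t. lambda_min A \<le> t \<Longrightarrow> \<bar>f t\<bar> \<le> M"
  shows "norm (mat_fun f A *v w) \<le> M * norm w"
proof (rule power2_le_imp_le)
  have "(norm (mat_fun f A *v w))\<^sup>2 = w \<bullet> (mat_fun f A *v (mat_fun f A *v w))"
    unfolding power2_norm_eq_inner by (rule sym_mat_inner_commute[OF sym_mat_mat_fun[OF assms(1)]])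
  also have "\<dots> = w \<bullet> (mat_fun (\<lambda>t. f t * f t) A *v w)"
    by (simp add: mat_fun_mult[OF assms(1)] matrix_vector_mul_assoc)
  also have "\<dots> \<le> w \<bullet> (mat_fun (\<lambda>_. M\<^sup>2) A *v w)"
  proof (rule inner_mat_fun_mono[OF assms(1)])
    fix t
    assume "lambda_min A \<le> t"
    then have "\<bar>f t\<bar>\<^sup>2 \<le> M\<^sup>2"
      using bound by (intro power_mono) auto
    then show "f t * f t \<le> M\<^sup>2"
      by (simp add: power2_eq_square)
  qed
  also have "\<dots> = (M * norm w)\<^sup>2"
    by (simp add: mat_fun_const[OF assms(1)] scaleR_matrix_vector_assoc[symmetric]
        power_mult_distrib power2_norm_eq_inner)
  finally show "(norm (mat_fun f A *v w))\<^sup>2 \<le> (M * norm w)\<^sup>2" .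
  show "0 \<le> M * norm w"
    using bound[of "lambda_min A"] by simp
qed

lemma has_real_derivative_inner_mat_fun:
  fixes A :: "real^'n^'n"
  assumes "sym_mat A"
    and deriv: "\<And>t. lambda_min A \<le> t \<Longrightarrow> ((\<lambda>T. f T t) has_real_derivative g t) (at T)"
  shows "((\<lambda>T. u \<bullet> (mat_fun (f T) A *v w)) has_real_derivative u \<bullet> (mat_fun g A *v w)) (at T)"
proof -
  obtain P d where P: "orthogonal_matrix P" and A: "A = P ** diag_mat d ** transpose P"
    and spectrum: "\<And>i. lambda_min A \<le> d $ i"
    using sym_mat_spectral_decomposition[OF assms(1)] by blast
  show ?thesis
    unfolding inner_mat_fun[OF P A]
    by (rule DERIV_sum, rule DERIV_cmult_right, rule DERIV_cmult_right, rule deriv, rule spectrum)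
qed

section \<open>Positive semidefinite forms\<close>

lemma trace_diagonalization:
  fixes P :: "real^'n^'n"
  assumes "orthogonal_matrix P" and "A = P ** diag_mat d ** transpose P"
  shows "trace A = (\<Sum>i\<in>UNIV. d $ i)"
proof -
  have "trace A = trace (diag_mat d ** (transpose P ** P))"
    using assms(2) trace_mul_sym[of P "diag_mat d ** transpose P"] by (simp add: matrix_mul_assoc)
  also have "\<dots> = (\<Sum>i\<in>UNIV. d $ i)"
    using assms(1) by (simp add: orthogonal_matrix_def trace_def diag_mat_def)
  finally show ?thesis .
qed

lemma psd_inner_le_trace:
  fixes D :: "real^'n^'n"
  assumes "sym_mat D" and psd: "\<And>w. 0 \<le> w \<bullet> (D *v w)"
  shows "w \<bullet> (D *v w) \<le> trace D * (w \<bullet> w)"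
proof -
  obtain P d where P: "orthogonal_matrix P" and D: "D = P ** diag_mat d ** transpose P"
    and spectrum: "\<And>i. lambda_min D \<le> d $ i"
    using sym_mat_spectral_decomposition[OF assms(1)] by blast
  define z where "z = transpose P *v w"
  have "d $ i * z $ i * z $ i \<le> d $ i * (w \<bullet> w)" for i
  proof -
    have "\<bar>z $ i\<bar>\<^sup>2 \<le> (norm z)\<^sup>2"
      by (rule power_mono[OF component_le_norm_cart]) simp
    also have "(norm z)\<^sup>2 = w \<bullet> w"
      using orthogonal_matrix_inner[of "transpose P" w w] P by (simp add: z_def power2_norm_eq_inner)
    finally have "z $ i * z $ i \<le> w \<bullet> w"
      by (simp add: power2_eq_square)
    moreover have "0 \<le> d $ i"
      using lambda_min_nonneg[OF assms] spectrum[of i] by linarith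
    ultimately show ?thesis
      by (simp add: mult.assoc mult_left_mono)
  qed
  then have "(\<Sum>i\<in>UNIV. d $ i * z $ i * z $ i) \<le> (\<Sum>i\<in>UNIV. d $ i * (w \<bullet> w))"
    by (rule sum_mono)
  moreover have "w \<bullet> (D *v w) = (\<Sum>i\<in>UNIV. d $ i * z $ i * z $ i)"
    using inner_mat_fun[OF P D, of w "\<lambda>t. t" w] mat_fun_ident[OF assms(1)] by (simp add: z_def)
  ultimately show ?thesis
    by (simp add: trace_diagonalization[OF P D] sum_distrib_right)
qed

lemma psd_trace_nonneg:
  fixes D :: "real^'n^'n"
  assumes "sym_mat D" and psd: "\<And>w. 0 \<le> w \<bullet> (D *v w)"
  shows "0 \<le> trace D"
proof -
  fix i :: 'n
  have "0 \<le> axis i 1 \<bullet> (D *v axis i 1)"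
    by (rule psd)
  also have "\<dots> \<le> trace D * (axis i 1 \<bullet> axis i (1::real))"
    by (rule psd_inner_le_trace[OF assms])
  finally show ?thesis
    by (simp add: inner_axis_axis)
qed

lemma sym_mat_quadratic_add:
  fixes D :: "real^'n^'n"
  assumes "sym_mat D"
  shows "(x + y) \<bullet> (D *v (x + y)) = x \<bullet> (D *v x) + 2 * (x \<bullet> (D *v y)) + y \<bullet> (D *v y)"
  using sym_mat_inner_commute[OF assms, of y x]
  by (simp add: matrix_vector_right_distrib inner_add_left inner_add_right)

lemma sym_mat_quadratic_diff:
  fixes D :: "real^'n^'n"
  assumes "sym_mat D"
  shows "(x - y) \<bullet> (D *v (x - y)) = x \<bullet> (D *v x) - 2 * (x \<bullet> (D *v y)) + y \<bullet> (D *v y)"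
  using sym_mat_inner_commute[OF assms, of y x]
  by (simp add: matrix_vector_mult_diff_distrib inner_diff_left inner_diff_right)

lemma inner_sym_congruence:
  fixes S D :: "real^'n^'n"
  assumes "sym_mat S"
  shows "v \<bullet> ((S ** D ** S) *v v) = (S *v v) \<bullet> (D *v (S *v v))"
proof -
  have "v \<bullet> ((S ** D ** S) *v v) = v \<bullet> (S *v (D *v (S *v v)))"
    by (simp add: matrix_vector_mul_assoc matrix_mul_assoc)
  also have "\<dots> = (D *v (S *v v)) \<bullet> (S *v v)"
    by (rule sym_mat_inner_commute[OF assms])
  finally show ?thesis
    by (simp add: inner_commute)
qed

lemma inner_scaleR_add_scaleR_mat_1:
  fixes M :: "real^'n^'n"
  shows "v \<bullet> ((a *\<^sub>R M + b *\<^sub>R mat 1) *v v) = a * (v \<bullet> (M *v v)) + b * (v \<bullet> v)"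
  by (simp add: matrix_vector_mult_add_rdistrib scaleR_matrix_vector_assoc[symmetric] inner_add_right)

lemma psd_inner_add3_le:
  fixes D :: "real^'n^'n"
  assumes "sym_mat D" and psd: "\<And>w. 0 \<le> w \<bullet> (D *v w)"
  shows "(a + b + c) \<bullet> (D *v (a + b + c)) \<le> 3 * (a \<bullet> (D *v a) + b \<bullet> (D *v b) + c \<bullet> (D *v c))"
proof -
  note expand = sym_mat_quadratic_add[OF assms(1)] sym_mat_quadratic_diff[OF assms(1)]
  have "(a + b + c) \<bullet> (D *v (a + b + c))
      = (a + b) \<bullet> (D *v (a + b)) + 2 * ((a + b) \<bullet> (D *v c)) + c \<bullet> (D *v c)"
    by (rule expand(1))
  also have "\<dots> = a \<bullet> (D *v a) + 2 * (a \<bullet> (D *v b)) + b \<bullet> (D *v b)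
      + 2 * (a \<bullet> (D *v c)) + 2 * (b \<bullet> (D *v c)) + c \<bullet> (D *v c)"
    by (simp only: expand(1)[of a b] inner_add_left[of a b "D *v c"] distrib_left add.assoc)
  finally have sum: "(a + b + c) \<bullet> (D *v (a + b + c)) = \<dots>" .
  have "0 \<le> (a - b) \<bullet> (D *v (a - b))" "0 \<le> (a - c) \<bullet> (D *v (a - c))"
    "0 \<le> (b - c) \<bullet> (D *v (b - c))"
    by (rule psd)+
  then show ?thesis
    unfolding sum expand(2) by (simp add: algebra_simps)
qed

section \<open>The integral kernel of the inverse square root\<close>

text \<open>\<open>inv_sqrt_integral t T = \<integral>\<^sub>0\<^sup>T s\<^sup>-\<^sup>1\<^sup>/\<^sup>2 / (t + s) ds\<close>, which tends to \<open>\<pi> / \<surd>t\<close> as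
  \<open>T \<rightarrow> \<infinity>\<close>.\<close>

definition inv_sqrt_integral :: "real \<Rightarrow> real \<Rightarrow> real" where
  "inv_sqrt_integral t T = 2 / sqrt t * arctan (sqrt (T / t))"

lemma has_real_derivative_inv_sqrt_integral:
  assumes "0 < t" and "0 < T"
  shows "((\<lambda>T. inv_sqrt_integral t T) has_real_derivative 1 / sqrt T * (1 / (t + T))) (at T)"
  unfolding inv_sqrt_integral_def using assms
  by (auto intro!: derivative_eq_intros simp: real_sqrt_divide divide_simps power2_eq_square)

lemma inv_sqrt_integral_bounds:
  assumes "0 < t" and "0 \<le> T"
  shows "0 \<le> inv_sqrt_integral t T" and "inv_sqrt_integral t T \<le> 2 * sqrt T / t"
proof -
  show "0 \<le> inv_sqrt_integral t T"
    using assms by (simp add: inv_sqrt_integral_def)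
  have "inv_sqrt_integral t T \<le> 2 / sqrt t * sqrt (T / t)"
    unfolding inv_sqrt_integral_def by (rule mult_left_mono) (use assms in \<open>simp_all add: arctan_le_self\<close>)
  also have "\<dots> = 2 * sqrt T / t"
    using assms by (simp add: real_sqrt_divide field_simps)
  finally show "inv_sqrt_integral t T \<le> 2 * sqrt T / t" .
qed

lemma inv_sqrt_integral_tail_bounds:
  assumes "0 < t" and "0 < T"
  shows "0 \<le> pi / sqrt t - inv_sqrt_integral t T" and "pi / sqrt t - inv_sqrt_integral t T \<le> 2 / sqrt T"
proof -
  have "arctan (1 / sqrt (T / t)) = pi / 2 - arctan (sqrt (T / t))"
    using arctan_inverse[of "sqrt (T / t)"] assms by (simp add: inverse_eq_divide)
  then have tail: "pi / sqrt t - inv_sqrt_integral t T = 2 / sqrt t * arctan (1 / sqrt (T / t))"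
    using assms by (simp add: inv_sqrt_integral_def field_simps)
  have "0 \<le> arctan (1 / sqrt (T / t))"
    using assms by simp
  then show "0 \<le> pi / sqrt t - inv_sqrt_integral t T"
    unfolding tail using assms by simp
  have "2 / sqrt t * arctan (1 / sqrt (T / t)) \<le> 2 / sqrt t * (1 / sqrt (T / t))"
    by (rule mult_left_mono) (use assms in \<open>simp_all add: arctan_le_self\<close>)
  also have "\<dots> = 2 / sqrt T"
    using assms by (simp add: real_sqrt_divide field_simps)
  finally show "pi / sqrt t - inv_sqrt_integral t T \<le> 2 / sqrt T"
    unfolding tail .
qed

section \<open>Resolvents\<close>

definition resolvent :: "real \<Rightarrow> real^'n^'n \<Rightarrow> real^'n^'n" where
  "resolvent T A = mat_fun (\<lambda>t. 1 / (t + T)) A"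

lemma mat_fun_shift:
  fixes A :: "real^'n^'n"
  assumes "sym_mat A"
  shows "mat_fun (\<lambda>t. t + T) A = A + T *\<^sub>R mat 1"
  using mat_fun_add[OF assms, of "\<lambda>t. t" "\<lambda>_. T"] by (simp add: mat_fun_ident mat_fun_const assms)

lemma resolvent_inverse:
  fixes A :: "real^'n^'n"
  assumes "sym_mat A" and "0 < lambda_min A + T"
  shows "(A + T *\<^sub>R mat 1) ** resolvent T A = mat 1" and "resolvent T A ** (A + T *\<^sub>R mat 1) = mat 1"
proof -
  have nonzero: "t + T \<noteq> 0" if "lambda_min A \<le> t" for t
    using that assms(2) by linarith
  have "mat_fun (\<lambda>t. t + T) A ** resolvent T A = mat_fun (\<lambda>_. 1) A"
    unfolding resolvent_def mat_fun_mult[OF assms(1), symmetric]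
    by (rule mat_fun_cong[OF assms(1)]) (simp add: nonzero)
  moreover have "resolvent T A ** mat_fun (\<lambda>t. t + T) A = mat_fun (\<lambda>_. 1) A"
    unfolding resolvent_def mat_fun_mult[OF assms(1), symmetric]
    by (rule mat_fun_cong[OF assms(1)]) (simp add: nonzero)
  ultimately show "(A + T *\<^sub>R mat 1) ** resolvent T A = mat 1" "resolvent T A ** (A + T *\<^sub>R mat 1) = mat 1"
    by (simp_all add: mat_fun_shift[OF assms(1)] mat_fun_const[OF assms(1)])
qed

text \<open>The variational characterisation \<open>v\<^sup>T (A + T)\<^sup>-\<^sup>1 v = max\<^sub>u (2 u\<^sup>T v - u\<^sup>T (A + T) u)\<close>;
  the gap is the value of the positive form \<open>(A + T)\<^sup>-\<^sup>1\<close> at \<open>v - (A + T) u\<close>.\<close>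

lemma resolvent_inner_ge:
  fixes A :: "real^'n^'n"
  assumes "sym_mat A" and "0 < lambda_min A + T"
  shows "2 * (u \<bullet> v) - u \<bullet> ((A + T *\<^sub>R mat 1) *v u) \<le> v \<bullet> (resolvent T A *v v)"
proof -
  define K where "K = A + T *\<^sub>R mat 1"
  define R where "R = resolvent T A"
  define z where "z = v - K *v u"
  have "sym_mat K"
    using sym_mat_mat_fun[OF assms(1)] by (simp add: K_def mat_fun_shift[OF assms(1), symmetric])
  have RK: "R *v (K *v u) = u" and KR: "K *v (R *v v) = v"
    using resolvent_inverse[OF assms] by (simp_all add: K_def R_def matrix_vector_mul_assoc)
  have "0 \<le> z \<bullet> (mat_fun (\<lambda>t. 1 / (t + T)) A *v z) - z \<bullet> (mat_fun (\<lambda>_. 0) A *v z)"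
    using assms by (simp add: inner_mat_fun_mono)
  then have "0 \<le> z \<bullet> (R *v z)"
    by (simp add: R_def resolvent_def mat_fun_const[OF assms(1)])
  also have "z \<bullet> (R *v z) = v \<bullet> (R *v v) - 2 * (u \<bullet> v) + u \<bullet> (K *v u)"
    using sym_mat_inner_commute[OF \<open>sym_mat K\<close>, of u "R *v v"]
    by (simp add: z_def RK KR matrix_vector_mult_diff_distrib inner_diff_left inner_diff_right inner_commute)
  finally show ?thesis
    by (simp add: K_def R_def)
qed

lemma resolvent_sandwich_le:
  fixes X Y :: "real^'n^'n"
  assumes "sym_mat X" "sym_mat Y" and "0 < lambda_min X + T" "0 < lambda_min Y + T"
  shows "(resolvent T X *v v) \<bullet> ((X - Y) *v (resolvent T X *v v))
    \<le> v \<bullet> (resolvent T Y *v v) - v \<bullet> (resolvent T X *v v)"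
proof -
  define u where "u = resolvent T X *v v"
  have "(X + T *\<^sub>R mat 1) *v u = v"
    using resolvent_inverse(1)[OF assms(1,3)] by (simp add: u_def matrix_vector_mul_assoc)
  have "u \<bullet> ((X - Y) *v u) = u \<bullet> ((X + T *\<^sub>R mat 1) *v u) - u \<bullet> ((Y + T *\<^sub>R mat 1) *v u)"
    by (simp add: matrix_vector_mult_add_rdistrib matrix_vector_mult_diff_rdistrib
        inner_add_right inner_diff_right)
  also have "\<dots> = u \<bullet> v - u \<bullet> ((Y + T *\<^sub>R mat 1) *v u)"
    by (simp add: \<open>(X + T *\<^sub>R mat 1) *v u = v\<close>)
  also have "\<dots> \<le> v \<bullet> (resolvent T Y *v v) - u \<bullet> v"
    using resolvent_inner_ge[OF assms(2,4), of u v] by simp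
  finally show ?thesis
    by (simp add: u_def inner_commute)
qed

lemma inner_mat_fun_ln_shift_bounds:
  fixes A :: "real^'n^'n"
  assumes "sym_mat A" and "0 \<le> lambda_min A" and "0 < T"
  shows "ln T * (v \<bullet> v) \<le> v \<bullet> (mat_fun (\<lambda>t. ln (t + T)) A *v v)"
    and "v \<bullet> (mat_fun (\<lambda>t. ln (t + T)) A *v v) \<le> ln T * (v \<bullet> v) + v \<bullet> (A *v v) / T"
proof -
  have "v \<bullet> (mat_fun (\<lambda>_. ln T) A *v v) \<le> v \<bullet> (mat_fun (\<lambda>t. ln (t + T)) A *v v)"
    using assms by (intro inner_mat_fun_mono) auto
  then show "ln T * (v \<bullet> v) \<le> v \<bullet> (mat_fun (\<lambda>t. ln (t + T)) A *v v)"
    by (simp add: mat_fun_const[OF assms(1)] scaleR_matrix_vector_assoc[symmetric])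
  have "ln (t + T) \<le> ln T + 1 / T * t" if "0 \<le> t" for t
  proof -
    have "1 + t / T = (t + T) / T"
      using \<open>0 < T\<close> by (simp add: field_simps)
    then have "ln (t + T) = ln T + ln (1 + t / T)"
      using that \<open>0 < T\<close> by (simp add: ln_div)
    also have "\<dots> \<le> ln T + 1 / T * t"
      using ln_add_one_self_le_self[of "t / T"] that \<open>0 < T\<close> by simp
    finally show ?thesis .
  qed
  then have "v \<bullet> (mat_fun (\<lambda>t. ln (t + T)) A *v v) \<le> v \<bullet> (mat_fun (\<lambda>t. ln T + 1 / T * t) A *v v)"
    using assms by (intro inner_mat_fun_mono) auto
  also have "mat_fun (\<lambda>t. ln T + 1 / T * t) A = ln T *\<^sub>R mat 1 + (1 / T) *\<^sub>R A"
    using mat_fun_add[OF assms(1), of "\<lambda>_. ln T" "\<lambda>t. 1 / T * t"]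
      mat_fun_cmult[OF assms(1), of "1 / T" "\<lambda>t. t"]
    by (simp only: mat_fun_const[OF assms(1)] mat_fun_ident[OF assms(1)])
  also have "v \<bullet> ((ln T *\<^sub>R mat 1 + (1 / T) *\<^sub>R A) *v v) = ln T * (v \<bullet> v) + v \<bullet> (A *v v) / T"
    by (simp add: matrix_vector_mult_add_rdistrib scaleR_matrix_vector_assoc[symmetric] inner_add_right)
  finally show "v \<bullet> (mat_fun (\<lambda>t. ln (t + T)) A *v v) \<le> ln T * (v \<bullet> v) + v \<bullet> (A *v v) / T" .
qed

lemma le_mult_if_quadratic_nonneg:
  fixes q A K :: real
  assumes "0 \<le> A" and nonneg: "\<And>s. 0 \<le> s\<^sup>2 * q * A - 2 * s * q + K"
  shows "q \<le> A * K"
proof (cases "A = 0")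
  case True
  have "q = 0"
  proof (rule ccontr)
    assume "q \<noteq> 0"
    have "0 \<le> ((K + 1) / (2 * q))\<^sup>2 * q * A - 2 * ((K + 1) / (2 * q)) * q + K"
      by (rule nonneg)
    also have "\<dots> = -1"
      using True \<open>q \<noteq> 0\<close> by (simp add: field_simps)
    finally show False
      by simp
  qed
  then show ?thesis
    using True by simp
next
  case False
  have "0 \<le> (1 / A)\<^sup>2 * q * A - 2 * (1 / A) * q + K"
    by (rule nonneg)
  also have "\<dots> = K - q / A"
    using False by (simp add: power2_eq_square field_simps)
  finally show ?thesis
    using False \<open>0 \<le> A\<close> by (simp add: divide_le_eq mult.commute)
qed

locale spd_loewner_pair =
  fixes X Y :: "real^'n^'n"
  assumes spd_X: "spd X" and spd_Y: "spd Y" and Y_le_X: "Y \<preceq>\<^sub>L X"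
begin

lemma sym_X: "sym_mat X" and sym_Y: "sym_mat Y"
  using spd_X spd_Y by (simp_all add: spd_def)

lemma sym_diff: "sym_mat (X - Y)"
  using sym_X sym_Y by (simp add: sym_mat_def transpose_def vec_eq_iff)

lemma psd_diff: "0 \<le> w \<bullet> ((X - Y) *v w)"
  using Y_le_X by (simp add: loewner_le_def matrix_vector_mult_diff_rdistrib inner_diff_right)

lemma lambda_min_X_pos: "0 < lambda_min X" and lambda_min_Y_pos: "0 < lambda_min Y"
  using spd_X spd_Y by (simp_all add: lambda_min_pos)

lemma resolvent_X_sandwich_le:
  assumes "0 \<le> T"
  shows "(resolvent T X *v v) \<bullet> ((X - Y) *v (resolvent T X *v v))
    \<le> v \<bullet> (resolvent T Y *v v) - v \<bullet> (resolvent T X *v v)"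
  using assms lambda_min_X_pos lambda_min_Y_pos by (intro resolvent_sandwich_le sym_X sym_Y) auto

text \<open>\<open>log_gap v\<close> is an antiderivative of the integrand \<open>v\<^sup>T ((Y + T)\<^sup>-\<^sup>1 - (X + T)\<^sup>-\<^sup>1) v\<close>
  of the representation of \<open>v\<^sup>T (log X - log Y) v\<close>, normalised to vanish at infinity.\<close>

definition log_gap :: "real^'n \<Rightarrow> real \<Rightarrow> real" where
  "log_gap v T = v \<bullet> (mat_fun (\<lambda>t. ln (t + T)) Y *v v) - v \<bullet> (mat_fun (\<lambda>t. ln (t + T)) X *v v)"

lemma log_gap_has_real_derivative:
  assumes "0 \<le> T"
  shows "(log_gap v has_real_derivative v \<bullet> (resolvent T Y *v v) - v \<bullet> (resolvent T X *v v)) (at T)"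
proof -
  have "((\<lambda>T. ln (t + T)) has_real_derivative 1 / (t + T)) (at T)" if "0 < t" for t
    using that assms by (auto intro!: derivative_eq_intros)
  then have "((\<lambda>T. v \<bullet> (mat_fun (\<lambda>t. ln (t + T)) A *v v)) has_real_derivative v \<bullet> (resolvent T A *v v)) (at T)"
    if "sym_mat A" "0 < lambda_min A" for A :: "real^'n^'n"
    unfolding resolvent_def using that by (intro has_real_derivative_inner_mat_fun) auto
  then show ?thesis
    unfolding log_gap_def
    by (intro DERIV_diff) (simp_all add: sym_X sym_Y lambda_min_X_pos lambda_min_Y_pos)
qed

lemma log_gap_mono:
  assumes "0 \<le> a" and "a \<le> b"
  shows "log_gap v a \<le> log_gap v b"
proof (rule DERIV_nonneg_imp_nondecreasing[OF \<open>a \<le> b\<close>])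
  fix T
  assume "a \<le> T"
  then have "0 \<le> T"
    using assms by simp
  have "0 \<le> v \<bullet> (resolvent T Y *v v) - v \<bullet> (resolvent T X *v v)"
    using psd_diff[of "resolvent T X *v v"] resolvent_X_sandwich_le[OF \<open>0 \<le> T\<close>, of v] by linarith
  then show "\<exists>y. (log_gap v has_real_derivative y) (at T) \<and> 0 \<le> y"
    using log_gap_has_real_derivative[OF \<open>0 \<le> T\<close>] by blast
qed

lemma log_gap_le:
  assumes "0 < T"
  shows "log_gap v T \<le> v \<bullet> (Y *v v) / T"
  using inner_mat_fun_ln_shift_bounds(2)[OF sym_Y _ assms, of v]
    inner_mat_fun_ln_shift_bounds(1)[OF sym_X _ assms, of v] lambda_min_X_pos lambda_min_Y_pos
  by (simp add: log_gap_def)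

lemma log_gap_nonpos:
  assumes "0 \<le> T"
  shows "log_gap v T \<le> 0"
proof (rule tendsto_lowerbound)
  show "((\<lambda>S. v \<bullet> (Y *v v) / S) \<longlongrightarrow> 0) at_top"
    by (intro tendsto_divide_0[OF tendsto_const] filterlim_at_top_imp_at_infinity filterlim_ident)
  have "log_gap v T \<le> v \<bullet> (Y *v v) / S" if "max T 1 \<le> S" for S
    using log_gap_mono[OF assms, of S v] log_gap_le[of S v] that by simp
  then show "\<forall>\<^sub>F S in at_top. log_gap v T \<le> v \<bullet> (Y *v v) / S"
    unfolding eventually_at_top_linorder by blast
qed simp

lemma log_gap_increment_le:
  assumes "0 \<le> c" and "c \<le> C"
  shows "log_gap v C - log_gap v c \<le> v \<bullet> (mat_log X *v v) - v \<bullet> (mat_log Y *v v)"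
proof -
  have "log_gap v 0 = v \<bullet> (mat_log Y *v v) - v \<bullet> (mat_log X *v v)"
    by (simp add: log_gap_def mat_log_def)
  then show ?thesis
    using log_gap_mono[OF order_refl assms(1), of v] log_gap_nonpos[of C v] assms by simp
qed

text \<open>\<open>window c C v = \<integral>\<^sub>c\<^sup>C T\<^sup>-\<^sup>1\<^sup>/\<^sup>2 (X + T)\<^sup>-\<^sup>1 v dT\<close>, the middle part of the integral
  representation of \<open>\<pi> X\<^sup>-\<^sup>1\<^sup>/\<^sup>2 v\<close>.\<close>

definition window :: "real \<Rightarrow> real \<Rightarrow> real^'n \<Rightarrow> real^'n" where
  "window c C v = mat_fun (\<lambda>t. inv_sqrt_integral t C - inv_sqrt_integral t c) X *v v"

lemma has_real_derivative_inner_window: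
  assumes "0 < T"
  shows "((\<lambda>T. w \<bullet> window c T v) has_real_derivative (1 / sqrt T) * (w \<bullet> (resolvent T X *v v))) (at T)"
proof -
  have "((\<lambda>T. inv_sqrt_integral t T - inv_sqrt_integral t c) has_real_derivative
      1 / sqrt T * (1 / (t + T))) (at T)" if "lambda_min X \<le> t" for t
    using has_real_derivative_inv_sqrt_integral[of t T] that assms lambda_min_X_pos
    by (auto intro!: derivative_eq_intros)
  then have "((\<lambda>T. w \<bullet> window c T v) has_real_derivative
      w \<bullet> (mat_fun (\<lambda>t. 1 / sqrt T * (1 / (t + T))) X *v v)) (at T)"
    unfolding window_def by (rule has_real_derivative_inner_mat_fun[OF sym_X])
  also have "mat_fun (\<lambda>t. 1 / sqrt T * (1 / (t + T))) X = (1 / sqrt T) *\<^sub>R resolvent T X"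
    by (simp only: mat_fun_cmult[OF sym_X] resolvent_def)
  finally show ?thesis
    by (simp add: scaleR_matrix_vector_assoc[symmetric])
qed

text \<open>Cauchy-Schwarz for the integral defining \<open>window\<close>, in the form of a
  discriminant: the function \<open>H\<close> below is nondecreasing because its derivative dominates the
  value of the form \<open>X - Y\<close> at \<open>s b - (X + T)\<^sup>-\<^sup>1 v\<close>, with \<open>s = \<sigma> / \<surd>T\<close>.\<close>

lemma window_quadratic_nonneg:
  fixes v :: "real^'n" and \<sigma> :: real
  assumes "0 < c" and "c \<le> C"
  defines "b \<equiv> window c C v"
  defines "q \<equiv> b \<bullet> ((X - Y) *v b)"
  shows "0 \<le> \<sigma>\<^sup>2 * q * (ln C - ln c) - 2 * \<sigma> * q + (log_gap v C - log_gap v c)"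
proof -
  define H where "H T = \<sigma>\<^sup>2 * q * (ln T - ln c) - 2 * \<sigma> * (((X - Y) *v b) \<bullet> window c T v)
    + (log_gap v T - log_gap v c)" for T
  have "H c \<le> H C"
  proof (rule DERIV_nonneg_imp_nondecreasing[OF \<open>c \<le> C\<close>])
    fix T
    assume "c \<le> T"
    then have "0 < T"
      using \<open>0 < c\<close> by simp
    define u where "u = resolvent T X *v v"
    define s where "s = \<sigma> / sqrt T"
    have "(H has_real_derivative \<sigma>\<^sup>2 * q * (1 / T - 0) - 2 * \<sigma> * (1 / sqrt T * (((X - Y) *v b) \<bullet> u))
        + (v \<bullet> (resolvent T Y *v v) - v \<bullet> (resolvent T X *v v) - 0)) (at T)"
      unfolding H_def[abs_def] u_def using \<open>0 < T\<close>
      by (intro DERIV_add DERIV_diff DERIV_cmult DERIV_ln_divide DERIV_const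
          has_real_derivative_inner_window log_gap_has_real_derivative) simp_all
    moreover have "\<sigma>\<^sup>2 * q * (1 / T - 0) - 2 * \<sigma> * (1 / sqrt T * (((X - Y) *v b) \<bullet> u))
        = s\<^sup>2 * q - 2 * s * (((X - Y) *v b) \<bullet> u)"
      using \<open>0 < T\<close> by (simp add: s_def power_divide)
    moreover have "0 \<le> (s *\<^sub>R b - u) \<bullet> ((X - Y) *v (s *\<^sub>R b - u))"
      by (rule psd_diff)
    moreover have "\<dots> = s\<^sup>2 * q - 2 * s * (((X - Y) *v b) \<bullet> u) + u \<bullet> ((X - Y) *v u)"
      using sym_mat_inner_commute[OF sym_diff, of b u]
      by (simp add: sym_mat_quadratic_diff[OF sym_diff] q_def matrix_vector_mult_scaleR
          power2_eq_square inner_commute)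
    moreover have "u \<bullet> ((X - Y) *v u) \<le> v \<bullet> (resolvent T Y *v v) - v \<bullet> (resolvent T X *v v)"
      unfolding u_def using \<open>0 < T\<close> by (intro resolvent_X_sandwich_le) simp
    ultimately show "\<exists>y. (H has_real_derivative y) (at T) \<and> 0 \<le> y"
      by (intro exI conjI) (assumption, linarith)
  qed
  moreover have "H c = 0"
    by (simp add: H_def window_def mat_fun_const[OF sym_X])
  moreover have "H C = \<sigma>\<^sup>2 * q * (ln C - ln c) - 2 * \<sigma> * q + (log_gap v C - log_gap v c)"
    by (simp add: H_def q_def b_def inner_commute)
  ultimately show ?thesis
    by simp
qed

lemma window_quadratic_le:
  assumes "0 < c" and "c \<le> C"
  shows "window c C v \<bullet> ((X - Y) *v window c C v)
    \<le> (ln C - ln c) * (v \<bullet> (mat_log X *v v) - v \<bullet> (mat_log Y *v v))"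
proof -
  have "0 \<le> ln C - ln c"
    using assms by simp
  then have "window c C v \<bullet> ((X - Y) *v window c C v) \<le> (ln C - ln c) * (log_gap v C - log_gap v c)"
    using assms by (intro le_mult_if_quadratic_nonneg window_quadratic_nonneg) auto
  also have "\<dots> \<le> (ln C - ln c) * (v \<bullet> (mat_log X *v v) - v \<bullet> (mat_log Y *v v))"
    using \<open>0 \<le> ln C - ln c\<close> log_gap_increment_le[of c C v] assms by (intro mult_left_mono) auto
  finally show ?thesis .
qed

lemma quadratic_diff_mat_fun_le:
  assumes "\<And>t. lambda_min X \<le> t \<Longrightarrow> \<bar>f t\<bar> \<le> M"
  shows "(mat_fun f X *v v) \<bullet> ((X - Y) *v (mat_fun f X *v v)) \<le> trace (X - Y) * M\<^sup>2 * (v \<bullet> v)"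
proof -
  have "norm (mat_fun f X *v v) \<le> M * norm v"
    by (rule norm_mat_fun_mult_vector_le[OF sym_X assms])
  then have "(mat_fun f X *v v) \<bullet> (mat_fun f X *v v) \<le> M\<^sup>2 * (v \<bullet> v)"
    by (metis norm_ge_zero power2_norm_eq_inner power_mono power_mult_distrib)
  then have "trace (X - Y) * ((mat_fun f X *v v) \<bullet> (mat_fun f X *v v)) \<le> trace (X - Y) * (M\<^sup>2 * (v \<bullet> v))"
    by (rule mult_left_mono) (rule psd_trace_nonneg[OF sym_diff psd_diff])
  then show ?thesis
    using psd_inner_le_trace[OF sym_diff psd_diff, of "mat_fun f X *v v"] by (simp add: mult.assoc)
qed

lemma quadratic_diff_head_le:
  fixes v :: "real^'n"
  assumes "0 < c"
  defines "h \<equiv> mat_fun (\<lambda>t. inv_sqrt_integral t c) X *v v"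
  shows "h \<bullet> ((X - Y) *v h) \<le> trace (X - Y) * (4 * c / (lambda_min X)\<^sup>2) * (v \<bullet> v)"
proof -
  have "h \<bullet> ((X - Y) *v h) \<le> trace (X - Y) * (2 * sqrt c / lambda_min X)\<^sup>2 * (v \<bullet> v)"
    unfolding h_def
  proof (rule quadratic_diff_mat_fun_le)
    fix t
    assume "lambda_min X \<le> t"
    have "inv_sqrt_integral t c \<le> 2 * sqrt c / t"
      using inv_sqrt_integral_bounds(2)[of t c] \<open>lambda_min X \<le> t\<close> lambda_min_X_pos assms by simp
    also have "\<dots> \<le> 2 * sqrt c / lambda_min X"
      using \<open>lambda_min X \<le> t\<close> lambda_min_X_pos assms by (intro divide_left_mono) auto
    finally show "\<bar>inv_sqrt_integral t c\<bar> \<le> 2 * sqrt c / lambda_min X"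
      using inv_sqrt_integral_bounds(1)[of t c] \<open>lambda_min X \<le> t\<close> lambda_min_X_pos assms by simp
  qed
  also have "(2 * sqrt c / lambda_min X)\<^sup>2 = 4 * c / (lambda_min X)\<^sup>2"
    using assms by (simp add: power_divide power_mult_distrib)
  finally show ?thesis .
qed

lemma quadratic_diff_tail_le:
  fixes v :: "real^'n"
  assumes "0 < C"
  defines "h \<equiv> mat_fun (\<lambda>t. pi / sqrt t - inv_sqrt_integral t C) X *v v"
  shows "h \<bullet> ((X - Y) *v h) \<le> trace (X - Y) * (4 / C) * (v \<bullet> v)"
proof -
  have "h \<bullet> ((X - Y) *v h) \<le> trace (X - Y) * (2 / sqrt C)\<^sup>2 * (v \<bullet> v)"
    unfolding h_def using inv_sqrt_integral_tail_bounds assms lambda_min_X_pos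
    by (intro quadratic_diff_mat_fun_le) (simp add: abs_le_iff)
  also have "(2 / sqrt C)\<^sup>2 = 4 / C"
    using assms by (simp add: power_divide)
  finally show ?thesis .
qed

lemma inv_sqrt_split:
  "pi *\<^sub>R (mat_inv_sqrt X *v v) = mat_fun (\<lambda>t. inv_sqrt_integral t c) X *v v + window c C v
     + mat_fun (\<lambda>t. pi / sqrt t - inv_sqrt_integral t C) X *v v"
proof -
  let ?I = "\<lambda>T t. inv_sqrt_integral t T"
  have "mat_fun (\<lambda>t. pi * (1 / sqrt t)) X
      = mat_fun (\<lambda>t. (?I c t + (?I C t - ?I c t)) + (pi / sqrt t - ?I C t)) X"
    by (rule mat_fun_cong[OF sym_X]) simp
  then have "pi *\<^sub>R mat_inv_sqrt X
      = mat_fun (?I c) X + mat_fun (\<lambda>t. ?I C t - ?I c t) X + mat_fun (\<lambda>t. pi / sqrt t - ?I C t) X"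
    by (simp only: mat_fun_cmult[OF sym_X] mat_fun_add[OF sym_X] mat_inv_sqrt_def)
  then show ?thesis
    by (simp add: window_def scaleR_matrix_vector_assoc matrix_vector_mult_add_rdistrib)
qed

lemma inv_sqrt_quadratic_le:
  assumes "0 < c" and "c \<le> C"
  shows "(mat_inv_sqrt X *v v) \<bullet> ((X - Y) *v (mat_inv_sqrt X *v v))
    \<le> 3 * (ln C - ln c) / pi\<^sup>2 * (v \<bullet> (mat_log X *v v) - v \<bullet> (mat_log Y *v v))
       + (12 * c / (pi\<^sup>2 * (lambda_min X)\<^sup>2) + 12 / (pi\<^sup>2 * C)) * trace (X - Y) * (v \<bullet> v)"
proof -
  let ?q = "\<lambda>w. w \<bullet> ((X - Y) *v w)"
  have "pi\<^sup>2 * ?q (mat_inv_sqrt X *v v) = ?q (pi *\<^sub>R (mat_inv_sqrt X *v v))"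
    by (simp add: matrix_vector_mult_scaleR power2_eq_square)
  also have "\<dots> \<le> 3 * (?q (mat_fun (\<lambda>t. inv_sqrt_integral t c) X *v v) + ?q (window c C v)
      + ?q (mat_fun (\<lambda>t. pi / sqrt t - inv_sqrt_integral t C) X *v v))"
    unfolding inv_sqrt_split[of v c C] by (rule psd_inner_add3_le[OF sym_diff psd_diff])
  also have "\<dots> \<le> 3 * (trace (X - Y) * (4 * c / (lambda_min X)\<^sup>2) * (v \<bullet> v)
      + (ln C - ln c) * (v \<bullet> (mat_log X *v v) - v \<bullet> (mat_log Y *v v)) + trace (X - Y) * (4 / C) * (v \<bullet> v))"
    using assms
    by (intro mult_left_mono add_mono quadratic_diff_head_le window_quadratic_le quadratic_diff_tail_le) auto
  finally have "pi\<^sup>2 * ?q (mat_inv_sqrt X *v v) \<le> \<dots>" .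
  then show ?thesis
    by (simp add: field_simps)
qed

end

theorem lemma3p2:
  fixes X Y :: "real^'n^'n" and c C :: real
  assumes "spd X" and "spd Y" and "Y \<preceq>\<^sub>L X"
    and "0 < c" and "c \<le> C"
  shows "mat_inv_sqrt X ** (X - Y) ** mat_inv_sqrt X \<preceq>\<^sub>L
           (3 * (ln C - ln c) / pi\<^sup>2) *\<^sub>R (mat_log X - mat_log Y)
           + ((12 * c * real CARD('n) / (pi\<^sup>2 * (lambda_min X)\<^sup>2)
               + 12 * real CARD('n) / (pi\<^sup>2 * C)) * trace (X - Y)) *\<^sub>R mat 1"
proof -
  interpret spd_loewner_pair X Y
    using assms(1-3) by unfold_locales
  define K where "K = (12 * c / (pi\<^sup>2 * (lambda_min X)\<^sup>2) + 12 / (pi\<^sup>2 * C)) * trace (X - Y)"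
  have "0 \<le> K"
    using assms(4,5) psd_trace_nonneg[OF sym_diff psd_diff] by (simp add: K_def)
  then have "K \<le> real CARD('n) * K"
    using mult_right_mono[of 1 "real CARD('n)" K] by simp
  also have "\<dots> = (12 * c * real CARD('n) / (pi\<^sup>2 * (lambda_min X)\<^sup>2)
      + 12 * real CARD('n) / (pi\<^sup>2 * C)) * trace (X - Y)"
    by (simp add: K_def algebra_simps)
  finally have K: "K * (v \<bullet> v) \<le> \<dots> * (v \<bullet> v)" for v :: "real^'n"
    by (rule mult_right_mono) simp
  have "sym_mat (mat_inv_sqrt X)"
    unfolding mat_inv_sqrt_def by (rule sym_mat_mat_fun[OF sym_X])
  then show ?thesis
    unfolding loewner_le_def inner_scaleR_add_scaleR_mat_1
      inner_sym_congruence[OF \<open>sym_mat (mat_inv_sqrt X)\<close>]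
      matrix_vector_mult_diff_rdistrib[of "mat_log X"] inner_diff_right
    using inv_sqrt_quadratic_le[OF assms(4,5)] K unfolding K_def
    by (meson add_left_mono order_trans)
qed

end
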